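(* Let $IS\in\{\Box,\blacksquare\}^2$ and let $\tau$ be a correct compositional translation from $\mathrm{SYNCSIMPLE}$ into $\mathrm{LOCKSIMPLE}_{2,IS}$ of blocking type $(P_1P_1,P_2P_2)$. Then: (1) the blocking prefix of $\tau(!)$ has the form $R_1P_1wT_2P_1$ with $w\in\{P_2,T_2\}^*$ and $R_1$ some word, and the blocking prefix of $\tau(?)$ has the form $R_3P_2w'T_1P_2$ with $w'\in\{P_1,T_1\}^*$ and $R_3$ some word; (2) $\tau(!)$ has a prefix in $\{T_1,P_1\}^*T_2$, and $\tau(?)$ has a prefix in $\{T_2,P_2\}^*T_1$.
   Context: $\mathrm{SYNCSIMPLE}$: subprocesses $\mathcal{U} ::= \checkmark \mid 0 \mid\, !\mathcal{U} \mid\, ?\mathcal{U}$; processes are finite parallel compositions ($\mid$ associative, commutative, $0$ a unit). Reduction: $!\mathcal{U}_1\mid ?\mathcal{U}_2\mid \mathcal{P}\to \mathcal{U}_1\mid\mathcal{U}_2\mid\mathcal{P}$. Successful: of form $\checkmark\mid\mathcal{P}$; may-convergent: reduces to a successful process; must-convergent: every reachable process is may-convergent. $\mathrm{LOCKSIMPLE}_{k,IS}$ ($IS\in\{\Box,\blacksquare\}^k$, $\Box$ empty, $\blacksquare$ full): subprocesses are words over $\{P_1,T_1,\dots,P_k,T_k\}$ followed by $0$ or $\checkmark$; states $(\mathcal{P},C)$ reduce by $(P_i\mathcal{U}\mid\mathcal{P},C)\to(\mathcal{U}\mid\mathcal{P},C[C_i:=\blacksquare])$ only if $C_i=\Box$,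 and $(T_i\mathcal{U}\mid\mathcal{P},C)\to(\mathcal{U}\mid\mathcal{P},C[C_i:=\Box])$ always. Success = process contains $\checkmark$; a process $\mathcal{P}$ is may/must-convergent iff the state $(\mathcal{P},IS)$ is. A compositional translation $\tau$ is given by words $\tau(!),\tau(?)$ with $\tau(0)=0$, $\tau(\checkmark)=\checkmark$, $\tau(!\mathcal{U})=\tau(!)\tau(\mathcal{U})$, $\tau(?\mathcal{U})=\tau(?)\tau(\mathcal{U})$, $\tau$ commuting with $\mid$; correct = preserves and reflects may- and must-convergence. Blocking prefix/type of a word $S$: execute $S$ alone as a single subprocess from store $IS$; if it gets stuck at an occurrence of $P_i$, the prefix ending with that occurrence is the blocking prefix; the type is $P_i$ if this occurrence is the first symbol from $\{P_i,T_i\}$ in $S$, and $P_iP_i$ otherwise (then the blocking prefix has form $R_1P_iR_2P_i$ with $R_2$ containing no $P_i,T_i$). $\tau$ has blocking type $(W_1,W_2)$ if $\tau(!)$ has type $W_1$ and $\tau(?)$ type $W_2$. $X^*$ denotes finite words over a symbol set $X$. *)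

theory Defs
  imports Main "HOL-Library.Multiset"
begin

datatype ssub = SCheck | SZero | SSend ssub | SRecv ssub

type_synonym sproc = "ssub multiset"

definition sync_step :: "sproc \<Rightarrow> sproc \<Rightarrow> bool" where
  "sync_step P Q \<longleftrightarrow> (\<exists>u1 u2 R. P = {#SSend u1, SRecv u2#} + R \<and> Q = {#u1, u2#} + R)"

definition sync_success :: "sproc \<Rightarrow> bool" where
  "sync_success P \<longleftrightarrow> SCheck \<in># P"

definition sync_may :: "sproc \<Rightarrow> bool" where
  "sync_may P \<longleftrightarrow> (\<exists>Q. sync_step\<^sup>*\<^sup>* P Q \<and> sync_success Q)"

definition sync_must :: "sproc \<Rightarrow> bool" where
  "sync_must P \<longleftrightarrow> (\<forall>Q. sync_step\<^sup>*\<^sup>* P Q \<longrightarrow> sync_may Q)"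

datatype lsym = LP nat | LT nat

text \<open>A subprocess: a word followed by 0 (False) or checkmark (True).\<close>
type_synonym lsub = "lsym list \<times> bool"
type_synonym lproc = "lsub multiset"
text \<open>Store: True = full, False = empty.\<close>
type_synonym store = "nat \<Rightarrow> bool"

definition lock_alphabet :: "nat \<Rightarrow> lsym set" where
  "lock_alphabet k = {LP i | i. 1 \<le> i \<and> i \<le> k} \<union> {LT i | i. 1 \<le> i \<and> i \<le> k}"

definition lock_step :: "lproc \<times> store \<Rightarrow> lproc \<times> store \<Rightarrow> bool" where
  "lock_step S S' \<longleftrightarrow>
     (\<exists>i u b R. fst S = {#(LP i # u, b)#} + R \<and> \<not> snd S i
        \<and> S' = ({#(u, b)#} + R, (snd S)(i := True))) \<or>
     (\<exists>i u b R. fst S = {#(LT i # u, b)#} + R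
        \<and> S' = ({#(u, b)#} + R, (snd S)(i := False)))"

definition lock_success :: "lproc \<times> store \<Rightarrow> bool" where
  "lock_success S \<longleftrightarrow> ([], True) \<in># fst S"

definition lock_may :: "lproc \<times> store \<Rightarrow> bool" where
  "lock_may S \<longleftrightarrow> (\<exists>S'. lock_step\<^sup>*\<^sup>* S S' \<and> lock_success S')"

definition lock_must :: "lproc \<times> store \<Rightarrow> bool" where
  "lock_must S \<longleftrightarrow> (\<forall>S'. lock_step\<^sup>*\<^sup>* S S' \<longrightarrow> lock_may S')"

fun trans_sub :: "lsym list \<Rightarrow> lsym list \<Rightarrow> ssub \<Rightarrow> lsub" where
  "trans_sub ts tr SCheck = ([], True)"
| "trans_sub ts tr SZero = ([], False)"
| "trans_sub ts tr (SSend u) = (ts @ fst (trans_sub ts tr u), snd (trans_sub ts tr u))"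
| "trans_sub ts tr (SRecv u) = (tr @ fst (trans_sub ts tr u), snd (trans_sub ts tr u))"

definition trans_proc :: "lsym list \<Rightarrow> lsym list \<Rightarrow> sproc \<Rightarrow> lproc" where
  "trans_proc ts tr P = image_mset (trans_sub ts tr) P"

text \<open>Translation given by the words ts = tau(!) and tr = tau(?) into LOCKSIMPLE_{k,IS}.\<close>
definition correct_translation :: "nat \<Rightarrow> store \<Rightarrow> lsym list \<Rightarrow> lsym list \<Rightarrow> bool" where
  "correct_translation k IS ts tr \<longleftrightarrow>
     set ts \<subseteq> lock_alphabet k \<and> set tr \<subseteq> lock_alphabet k \<and>
     (\<forall>P. (sync_may P \<longleftrightarrow> lock_may (trans_proc ts tr P, IS)) \<and>
          (sync_must P \<longleftrightarrow> lock_must (trans_proc ts tr P, IS)))"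

fun blocking_prefix :: "store \<Rightarrow> lsym list \<Rightarrow> lsym list option" where
  "blocking_prefix C [] = None"
| "blocking_prefix C (LP i # w) =
     (if C i then Some [LP i] else map_option (Cons (LP i)) (blocking_prefix (C(i := True)) w))"
| "blocking_prefix C (LT i # w) = map_option (Cons (LT i)) (blocking_prefix (C(i := False)) w)"

datatype btype = BT_P nat | BT_PP nat

definition sym_idx :: "lsym \<Rightarrow> nat" where
  "sym_idx s = (case s of LP i \<Rightarrow> i | LT i \<Rightarrow> i)"

definition blocking_type :: "store \<Rightarrow> lsym list \<Rightarrow> btype option" where
  "blocking_type C S =
     (case blocking_prefix C S of
        None \<Rightarrow> None
      | Some p \<Rightarrow> (let i = sym_idx (last p) in
          if (\<forall>s \<in> set (butlast p). sym_idx s \<noteq> i) then Some (BT_P i) else Some (BT_PP i)))"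

end

theory Submission
  imports Defs
begin

(* A word acts on each lock independently, through the subsequence of its P_k/T_k
   symbols.  The processes !0 | ?\<checkmark> and !\<checkmark> | ?0 are must-convergent, so their translations
   ts | tr can never get stuck without success.  Let tr run alone up to its blocking P_2, which
   leaves lock 2 full; unless the first lock-2 symbol of ts is T_2, ts never frees lock 2 and
   both words get stuck.  This is (2).
   For (1), if the symbol of ts in front of its blocking P_1 is not T_2, lockwise bookkeeping
   yields a schedule (a prefix of ts, the blocking prefix of tr, then more of ts) after which
   both words wait at a P on a full lock, again a stuck state without success. *)

(* A single lock as a boolean (True = full) and a sequence of operations on it (True = P,
   False = T); after each operation the state of the lock equals that operation. *)
fun lock_ok :: "bool \<Rightarrow> bool list \<Rightarrow> bool" where
  "lock_ok c [] = True"
| "lock_ok c (a # t) = (\<not> (c \<and> a) \<and> lock_ok a t)"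

fun lock_after :: "bool \<Rightarrow> bool list \<Rightarrow> bool" where
  "lock_after c [] = c"
| "lock_after c (a # t) = lock_after a t"

lemma lock_ok_append [simp]:
  "lock_ok c (t @ u) \<longleftrightarrow> lock_ok c t \<and> lock_ok (lock_after c t) u"
  by (induction t arbitrary: c) auto

lemma lock_after_append [simp]: "lock_after c (t @ u) = lock_after (lock_after c t) u"
  by (induction t arbitrary: c) auto

lemma lock_after_eq_last: "t \<noteq> [] \<Longrightarrow> lock_after c t = last t"
  by (induction t arbitrary: c) auto

lemma lock_ok_FalseI: "lock_ok c t \<Longrightarrow> lock_ok False t"
  by (cases t) auto

lemma lock_ok_TrueD: "lock_ok True t \<Longrightarrow> lock_ok c t"
  by (cases t) auto

lemma lock_ok_depends_on_start:
  assumes "lock_ok c t" "\<not> lock_ok d t"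
  shows "d \<and> \<not> c \<and> (\<exists>t'. t = True # t')"
  using assms by (cases t) auto

lemma sym_idx_simps [simp]: "sym_idx (LP i) = i" "sym_idx (LT i) = i"
  by (simp_all add: sym_idx_def)

definition lock_trace :: "nat \<Rightarrow> lsym list \<Rightarrow> bool list" where
  "lock_trace k p = map (\<lambda>s. s = LP k) (filter (\<lambda>s. sym_idx s = k) p)"

lemma lock_trace_simps [simp]:
  "lock_trace k [] = []"
  "lock_trace k (LP i # p) = (if i = k then True # lock_trace k p else lock_trace k p)"
  "lock_trace k (LT i # p) = (if i = k then False # lock_trace k p else lock_trace k p)"
  "lock_trace k (p @ q) = lock_trace k p @ lock_trace k q"
  by (auto simp: lock_trace_def sym_idx_def)

lemma lock_trace_eq_Nil_iff: "lock_trace k p = [] \<longleftrightarrow> (\<forall>s\<in>set p. sym_idx s \<noteq> k)"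
  by (auto simp: lock_trace_def filter_empty_conv)

definition word_runs :: "store \<Rightarrow> lsym list \<Rightarrow> bool" where
  "word_runs C p \<longleftrightarrow> (\<forall>k. lock_ok (C k) (lock_trace k p))"

definition store_after :: "store \<Rightarrow> lsym list \<Rightarrow> store" where
  "store_after C p = (\<lambda>k. lock_after (C k) (lock_trace k p))"

lemma word_runs_append [simp]:
  "word_runs C (p @ q) \<longleftrightarrow> word_runs C p \<and> word_runs (store_after C p) q"
  by (auto simp: word_runs_def store_after_def)

lemma store_after_append [simp]: "store_after C (p @ q) = store_after (store_after C p) q"
  by (simp add: store_after_def)

lemma word_runs_Nil [simp]: "word_runs C []"
  and store_after_Nil [simp]: "store_after C [] = C"
  by (simp_all add: word_runs_def store_after_def)

lemma word_runs_single [simp]: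
  "word_runs C [LP i] \<longleftrightarrow> \<not> C i"
  "word_runs C [LT i]"
  by (auto simp: word_runs_def)

lemma store_after_single [simp]:
  "store_after C [LP i] = C(i := True)"
  "store_after C [LT i] = C(i := False)"
  by (auto simp: store_after_def)

lemma word_runs_two_locks:
  assumes "set p \<subseteq> {LP i, LT i, LP j, LT j}"
  shows "word_runs C p \<longleftrightarrow> lock_ok (C i) (lock_trace i p) \<and> lock_ok (C j) (lock_trace j p)"
proof -
  have "lock_trace k p = []" if "k \<noteq> i" "k \<noteq> j" for k
    using assms that by (fastforce simp: lock_trace_eq_Nil_iff)
  then show ?thesis by (metis lock_ok.simps(1) word_runs_def)
qed

lemma lock_step_symbol:
  assumes "word_runs C [s]"
  shows "lock_step (add_mset (s # r, b) R, C) (add_mset (r, b) R, store_after C [s])"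
proof (cases s)
  case (LP i)
  with assms show ?thesis unfolding lock_step_def
    by (intro disjI1 exI[of _ i] exI[of _ r] exI[of _ b] exI[of _ R]) simp
next
  case (LT i)
  then show ?thesis unfolding lock_step_def
    by (intro disjI2 exI[of _ i] exI[of _ r] exI[of _ b] exI[of _ R]) simp
qed

lemma lock_steps_word:
  "word_runs C p \<Longrightarrow> lock_step\<^sup>*\<^sup>* (add_mset (p @ r, b) R, C) (add_mset (r, b) R, store_after C p)"
proof (induction p arbitrary: C)
  case (Cons s p)
  then have "word_runs C [s]" "word_runs (store_after C [s]) p"
    using word_runs_append[of C "[s]" p] by simp_all
  then show ?case
    using lock_step_symbol Cons.IH store_after_append[of C "[s]" p]
    by (metis append_Cons append_Nil converse_rtranclp_into_rtranclp)
qed simp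

lemma lock_steps_schedule:
  assumes "x = a1 @ a2 @ r1" "y = b @ r2" "word_runs C (a1 @ b @ a2)"
  shows "lock_step\<^sup>*\<^sup>* ({#(x, b1), (y, b2)#}, C) ({#(r1, b1), (r2, b2)#}, store_after C (a1 @ b @ a2))"
proof -
  have "lock_step\<^sup>*\<^sup>* ({#(x, b1), (y, b2)#}, C) ({#(a2 @ r1, b1), (y, b2)#}, store_after C a1)"
    using lock_steps_word[of C a1 "a2 @ r1" b1 "{#(y, b2)#}"] assms by simp
  also have "lock_step\<^sup>*\<^sup>* \<dots> ({#(a2 @ r1, b1), (r2, b2)#}, store_after C (a1 @ b))"
    using lock_steps_word[of "store_after C a1" b r2 b2 "{#(a2 @ r1, b1)#}"] assms
    by (simp add: add_mset_commute)
  also have "lock_step\<^sup>*\<^sup>* \<dots> ({#(r1, b1), (r2, b2)#}, store_after C (a1 @ b @ a2))"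
    using lock_steps_word[of "store_after C (a1 @ b)" a2 r1 b1 "{#(r2, b2)#}"] assms by simp
  finally show ?thesis .
qed

lemma not_lock_may_if_stuck:
  assumes "\<forall>(w, b) \<in># M. (w = [] \<and> \<not> b) \<or> (\<exists>k r. w = LP k # r \<and> C k)"
  shows "\<not> lock_may (M, C)"
proof -
  have "\<not> lock_step (M, C) S" for S
    using assms unfolding lock_step_def by fastforce
  moreover have "\<not> lock_success (M, C)"
    using assms unfolding lock_success_def by fastforce
  ultimately show ?thesis
    unfolding lock_may_def by (metis converse_rtranclpE)
qed

lemma blocking_prefix_split:
  "blocking_prefix C w = Some q \<Longrightarrow>
     \<exists>p k r. q = p @ [LP k] \<and> w = p @ LP k # r \<and> word_runs C p \<and> store_after C p k"
proof (induction C w arbitrary: q rule: blocking_prefix.induct)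
  case (2 C i w)
  show ?case
  proof (cases "C i")
    case True
    then show ?thesis using "2.prems" by (intro exI[of _ "[]"]) auto
  next
    case False
    with "2.prems" obtain q' where "blocking_prefix (C(i := True)) w = Some q'" "q = LP i # q'"
      by auto
    with False "2.IH" show ?thesis
      by (metis append_Cons append_Nil store_after_append store_after_single(1)
          word_runs_append word_runs_single(1))
  qed
next
  case (3 C i w)
  then obtain q' where "blocking_prefix (C(i := False)) w = Some q'" "q = LT i # q'"
    by auto
  with "3.IH" show ?case
    by (metis append_Cons append_Nil store_after_append store_after_single(2)
        word_runs_append word_runs_single(2))
qed simp

lemma blocking_type_PP_split:
  assumes "blocking_type C w = Some (BT_PP i)"
  shows "\<exists>p r. blocking_prefix C w = Some (p @ [LP i]) \<and> w = p @ LP i # r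
           \<and> word_runs C p \<and> store_after C p i \<and> lock_trace i p \<noteq> []"
proof -
  obtain q where q: "blocking_prefix C w = Some q"
    using assms by (cases "blocking_prefix C w") (auto simp: blocking_type_def)
  then obtain p k r where p: "q = p @ [LP k]" "w = p @ LP k # r" "word_runs C p" "store_after C p k"
    using blocking_prefix_split by blast
  have "k = i" "\<exists>s\<in>set p. sym_idx s = k"
    using assms q p(1) by (auto simp: blocking_type_def Let_def split: if_splits)
  then show ?thesis
    using q p by (auto simp: lock_trace_eq_Nil_iff)
qed

lemma word_run_maximal:
  "\<exists>p r. w = p @ r \<and> word_runs C p \<and> (r = [] \<or> (\<exists>k r'. r = LP k # r' \<and> store_after C p k))"
proof (induction w arbitrary: C)
  case (Cons s w)
  show ?case
  proof (cases "word_runs C [s]")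
    case True
    with Cons.IH[of "store_after C [s]"] show ?thesis
      by (metis append_Cons append_Nil store_after_append word_runs_append)
  next
    case False
    then obtain k where "s = LP k" "C k" by (cases s) auto
    then show ?thesis by (intro exI[of _ "[]"] exI[of _ "s # w"]) simp
  qed
qed simp

lemma lock_trace_first_split:
  assumes "lock_trace k p = a # t"
  shows "\<exists>g g'. p = g @ (if a then LP k else LT k) # g' \<and> lock_trace k g = []"
proof -
  have "\<exists>s\<in>set p. sym_idx s = k"
    using assms by (metis lock_trace_eq_Nil_iff list.distinct(1))
  then obtain g s g' where p: "p = g @ s # g'" "sym_idx s = k" "\<forall>s'\<in>set g. sym_idx s' \<noteq> k"
    by (rule split_list_first_propE)
  then have "s = (if a then LP k else LT k)"
    using assms by (cases s) (auto simp: lock_trace_eq_Nil_iff[THEN iffD2])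
  with p show ?thesis by (auto simp: lock_trace_eq_Nil_iff)
qed

lemma lock_trace_last_split:
  assumes "lock_trace k p = t @ [a]"
  shows "\<exists>g g'. p = g @ (if a then LP k else LT k) # g' \<and> lock_trace k g' = []"
proof -
  have "\<exists>s\<in>set p. sym_idx s = k"
    using assms by (metis lock_trace_eq_Nil_iff snoc_eq_iff_butlast)
  then obtain g s g' where p: "p = g @ s # g'" "sym_idx s = k" "\<forall>s'\<in>set g'. sym_idx s' \<noteq> k"
    by (rule split_list_last_propE)
  then have "s = (if a then LP k else LT k)"
    using assms by (cases s) (auto simp: lock_trace_eq_Nil_iff[THEN iffD2])
  with p show ?thesis by (auto simp: lock_trace_eq_Nil_iff)
qed

lemma set_subset_if_lock_trace_Nil:
  assumes "set g \<subseteq> {LP i, LT i, LP j, LT j}" "lock_trace i g = []"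
  shows "set g \<subseteq> {LP j, LT j}"
  using assms by (fastforce simp: lock_trace_eq_Nil_iff)

lemma split_at_first_release:
  assumes "\<exists>t. lock_trace j x = False # t" "set x \<subseteq> {LP i, LT i, LP j, LT j}"
  shows "\<exists>v z. x = v @ [LT j] @ z \<and> set v \<subseteq> {LT i, LP i}"
proof -
  obtain v z where x: "x = v @ LT j # z" and v: "lock_trace j v = []"
    using assms(1) lock_trace_first_split[of j x False] by auto
  have "set v \<subseteq> {LP j, LT j, LP i, LT i}"
    using x assms(2) by auto
  then have "set v \<subseteq> {LP i, LT i}"
    using v set_subset_if_lock_trace_Nil by blast
  with x show ?thesis by auto
qed

lemma releases_first_if_other_blocks:
  assumes y: "y = py @ LP j # ry" "word_runs C py" "store_after C py j"
    and must: "lock_must ({#(x, False), (y, True)#}, C)"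
  shows "\<exists>t. lock_trace j x = False # t"
proof (rule ccontr)
  assume not_release: "\<nexists>t. lock_trace j x = False # t"
  obtain p r where x: "x = p @ r" and runs: "word_runs (store_after C py) p"
    and stuck: "r = [] \<or> (\<exists>k r'. r = LP k # r' \<and> store_after (store_after C py) p k)"
    using word_run_maximal by blast
  have "lock_ok True (lock_trace j p)"
    using runs y(3) unfolding word_runs_def by metis
  then have "lock_trace j p = []"
    using not_release x by (cases "lock_trace j p") auto
  then have full: "store_after C (py @ p) j"
    using y(3) by (simp add: store_after_def)
  have "lock_step\<^sup>*\<^sup>* ({#(x, False), (y, True)#}, C) ({#(r, False), (LP j # ry, True)#}, store_after C (py @ p))"
    using lock_steps_schedule[of x "[]" p r y py "LP j # ry" C] x y runs by simp
  moreover have "\<not> lock_may ({#(r, False), (LP j # ry, True)#}, store_after C (py @ p))"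
    using stuck full by (intro not_lock_may_if_stuck) auto
  ultimately show False
    using must unfolding lock_must_def by blast
qed

lemma sync_step_handshake: "sync_step {#SSend u1, SRecv u2#} Q \<Longrightarrow> Q = {#u1, u2#}"
  unfolding sync_step_def
proof (elim exE conjE)
  fix v1 v2 R
  assume h: "{#SSend u1, SRecv u2#} = {#SSend v1, SRecv v2#} + R" "Q = {#v1, v2#} + R"
  have "R = {#}"
    using arg_cong[OF h(1), of size] by simp
  with h show "Q = {#u1, u2#}"
    by (auto simp: add_eq_conv_ex)
qed

lemma sync_must_handshake:
  assumes "u1 \<in> {SCheck, SZero}" "u2 \<in> {SCheck, SZero}" "SCheck \<in> {u1, u2}"
  shows "sync_must {#SSend u1, SRecv u2#}"
proof -
  have final: "\<not> sync_step {#u1, u2#} Q" for Q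
  proof
    assume "sync_step {#u1, u2#} Q"
    then obtain v1 v2 R where "{#u1, u2#} = {#SSend v1, SRecv v2#} + R"
      unfolding sync_step_def by blast
    then have "SSend v1 \<in># {#u1, u2#}"
      by simp
    with assms(1,2) show False
      by auto
  qed
  have "sync_step\<^sup>*\<^sup>* {#SSend u1, SRecv u2#} Q \<Longrightarrow> Q = {#SSend u1, SRecv u2#} \<or> Q = {#u1, u2#}" for Q
    by (induction rule: rtranclp_induct) (auto dest: sync_step_handshake simp: final)
  moreover have "sync_step {#SSend u1, SRecv u2#} {#u1, u2#}"
    unfolding sync_step_def by (intro exI[of _ u1] exI[of _ u2] exI[of _ "{#}"]) simp
  moreover have "sync_success {#u1, u2#}"
    using assms(3) by (auto simp: sync_success_def)
  ultimately show ?thesis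
    unfolding sync_must_def sync_may_def by blast
qed

lemma correct_translation_handshakes_must:
  assumes "correct_translation k C ts tr"
  shows "lock_must ({#(ts, False), (tr, True)#}, C)" "lock_must ({#(tr, False), (ts, True)#}, C)"
proof -
  have "sync_must {#SSend SZero, SRecv SCheck#}" "sync_must {#SSend SCheck, SRecv SZero#}"
    by (auto intro: sync_must_handshake)
  then show "lock_must ({#(ts, False), (tr, True)#}, C)" "lock_must ({#(tr, False), (ts, True)#}, C)"
    using assms by (auto simp: correct_translation_def trans_proc_def add_mset_commute)
qed

lemma lock_alphabet_2: "lock_alphabet 2 = {LP 1, LT 1, LP 2, LT 2}"
  unfolding lock_alphabet_def by (auto simp: le_Suc_eq numeral_2_eq_2)

(* The two words in the roles of the paper: (x, i, y, j) is (ts, 1, tr, 2) or (tr, 2, ts, 1). *)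
locale blocked_pair =
  fixes i j :: nat and C :: store and x y px rx py ry :: "lsym list"
  assumes distinct: "i \<noteq> j"
    and x_alphabet: "set x \<subseteq> {LP i, LT i, LP j, LT j}"
    and y_alphabet: "set y \<subseteq> {LP i, LT i, LP j, LT j}"
    and x_blocks: "x = px @ LP i # rx" "word_runs C px" "store_after C px i"
    and x_reacquires: "lock_trace i px \<noteq> []"
    and y_blocks: "y = py @ LP j # ry" "word_runs C py" "store_after C py j"
    and y_reacquires: "lock_trace j py \<noteq> []"
    and x_releases_first: "\<exists>t. lock_trace j x = False # t"
    and y_releases_first: "\<exists>t. lock_trace i y = False # t"
begin

lemma px_lock_ok: "lock_ok (C k) (lock_trace k px)"
  and py_lock_ok: "lock_ok (C k) (lock_trace k py)"
  using x_blocks(2) y_blocks(2) by (simp_all add: word_runs_def)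

lemma px_lock_ok_True: "lock_ok True (lock_trace j px)"
  using x_releases_first px_lock_ok[of j] unfolding x_blocks(1)
  by (cases "lock_trace j px") auto

lemma py_lock_ok_True: "lock_ok True (lock_trace i py)"
  using y_releases_first py_lock_ok[of i] unfolding y_blocks(1)
  by (cases "lock_trace i py") auto

lemma py_leaves_j_full: "lock_after c (lock_trace j py)"
  using y_blocks(3) y_reacquires by (simp add: store_after_def lock_after_eq_last)

lemma not_must_if_deadlock_schedule:
  assumes "x = a1 @ a2 @ LP i # r"
    and "lock_ok (C i) (lock_trace i (a1 @ py @ a2))" "lock_after (C i) (lock_trace i (a1 @ py @ a2))"
    and "lock_ok (C j) (lock_trace j (a1 @ py @ a2))" "lock_after (C j) (lock_trace j (a1 @ py @ a2))"
  shows "\<not> lock_must ({#(x, b1), (y, b2)#}, C)"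
proof
  assume must: "lock_must ({#(x, b1), (y, b2)#}, C)"
  have "set (a1 @ py @ a2) \<subseteq> {LP i, LT i, LP j, LT j}"
    using assms(1) y_blocks(1) x_alphabet y_alphabet by auto
  then have "word_runs C (a1 @ py @ a2)"
    using assms(2,4) word_runs_two_locks by blast
  then have "lock_step\<^sup>*\<^sup>* ({#(x, b1), (y, b2)#}, C)
      ({#(LP i # r, b1), (LP j # ry, b2)#}, store_after C (a1 @ py @ a2))"
    using assms(1) y_blocks(1) by (intro lock_steps_schedule) auto
  moreover have "\<not> lock_may ({#(LP i # r, b1), (LP j # ry, b2)#}, store_after C (a1 @ py @ a2))"
    using assms(3,5) by (intro not_lock_may_if_stuck) (auto simp: store_after_def)
  ultimately show False
    using must unfolding lock_must_def by blast
qed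

lemma not_must_if_y_first:
  assumes "x = a @ LP i # r" "px = a @ a'"
    and "lock_ok (store_after C py i) (lock_trace i a)" "lock_after (store_after C py i) (lock_trace i a)"
    and "lock_after True (lock_trace j a)"
  shows "\<not> lock_must ({#(x, b1), (y, b2)#}, C)"
proof (rule not_must_if_deadlock_schedule[of "[]" a r])
  have "lock_ok True (lock_trace j a)"
    using px_lock_ok_True assms(2) by simp
  then show "lock_ok (C j) (lock_trace j ([] @ py @ a))"
    using py_lock_ok[of j] y_blocks(3) by (simp add: store_after_def)
qed (use assms py_lock_ok[of i] y_blocks(3) in \<open>auto simp: store_after_def\<close>)

lemma not_must_if_x_first:
  assumes "x = a @ LP i # r" "px = a @ a'"
    and "\<not> store_after C a j" "lock_after (store_after C a i) (lock_trace i py)"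
  shows "\<not> lock_must ({#(x, b1), (y, b2)#}, C)"
proof (rule not_must_if_deadlock_schedule[of a "[]" r])
  have "lock_ok (store_after C a i) (lock_trace i py)"
    using py_lock_ok_True by (rule lock_ok_TrueD)
  then show "lock_ok (C i) (lock_trace i (a @ py @ []))"
    using px_lock_ok[of i] assms(2) by (simp add: store_after_def)
  show "lock_ok (C j) (lock_trace j (a @ py @ []))"
    using px_lock_ok[of j] py_lock_ok[of j] assms(2,3) by (simp add: store_after_def lock_ok_FalseI)
qed (use assms py_leaves_j_full in \<open>auto simp: store_after_def\<close>)

lemma not_must_if_y_before_last_acquire:
  assumes "px = d @ [LP i]" "\<not> store_after C px j" "\<not> lock_after True (lock_trace i py)"
  shows "\<not> lock_must ({#(x, b1), (y, b2)#}, C)"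
proof (rule not_must_if_deadlock_schedule[of d "[LP i]" rx])
  have released: "lock_ok (C i) (lock_trace i d)" "\<not> lock_after (C i) (lock_trace i d)"
    using px_lock_ok[of i] assms(1) by simp_all
  have "lock_trace i py \<noteq> []"
    using assms(3) by auto
  then have "\<not> lock_after False (lock_trace i py)"
    using assms(3) by (simp add: lock_after_eq_last)
  then show "lock_ok (C i) (lock_trace i (d @ py @ [LP i]))"
    "lock_after (C i) (lock_trace i (d @ py @ [LP i]))"
    using released py_lock_ok[of i] by (simp_all add: lock_ok_FalseI)
  show "lock_ok (C j) (lock_trace j (d @ py @ [LP i]))"
    using px_lock_ok[of j] py_lock_ok[of j] assms(1,2) distinct
    by (simp add: store_after_def lock_ok_FalseI)
qed (use assms x_blocks(1) py_leaves_j_full distinct in \<open>auto simp: store_after_def\<close>)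

lemma not_must_if_px_leaves_j_full:
  assumes "lock_after True (lock_trace j px)"
  shows "\<not> lock_must ({#(x, b1), (y, b2)#}, C)"
proof (cases "lock_ok (store_after C py i) (lock_trace i px)")
  case True
  moreover have "lock_after (store_after C py i) (lock_trace i px)"
    using x_blocks(3) x_reacquires by (simp add: store_after_def lock_after_eq_last)
  ultimately show ?thesis
    using assms x_blocks(1) by (intro not_must_if_y_first[of px rx "[]"]) auto
next
  case False
  \<comment> \<open>Then lock i is free initially but full after py, and px first acquires it: stop x there.\<close>
  then obtain t where "lock_trace i px = True # t" and py_holds: "store_after C py i" and free: "\<not> C i"
    using lock_ok_depends_on_start[OF px_lock_ok[of i] False] by blast
  then obtain g g' where px: "px = g @ LP i # g'" and g: "lock_trace i g = []"
    using lock_trace_first_split by fastforce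
  show ?thesis
  proof (cases "lock_after True (lock_trace j g)")
    case True
    then show ?thesis
      using py_holds g px x_blocks(1)
      by (intro not_must_if_y_first[of g "g' @ LP i # rx" "LP i # g'"]) auto
  next
    case False
    then have "\<not> store_after C g j"
      by (cases "lock_trace j g") (auto simp: store_after_def lock_after_eq_last)
    moreover have "lock_after (store_after C g i) (lock_trace i py)"
      using py_holds free g by (simp add: store_after_def)
    ultimately show ?thesis
      using px x_blocks(1) by (intro not_must_if_x_first[of g "g' @ LP i # rx" "LP i # g'"]) auto
  qed
qed

lemma px_ends_with_LP:
  assumes "last px \<noteq> LT j" "\<not> lock_after True (lock_trace j px)"
  obtains d where "px = d @ [LP i]"
proof -
  obtain d s where px: "px = d @ [s]"
    using x_reacquires by (metis lock_trace_simps(1) rev_exhaust)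
  have "s \<in> set x"
    using x_blocks(1) px by simp
  then have "s \<in> {LP i, LT i, LP j, LT j}"
    using x_alphabet by blast
  moreover have "s \<noteq> LT i"
    using x_blocks(3) px by auto
  moreover have "s \<noteq> LP j"
    using assms(2) px by auto
  moreover have "s \<noteq> LT j"
    using assms(1) px by simp
  ultimately have "s = LP i"
    by blast
  with px that show ?thesis by blast
qed

lemma not_must_if_px_ends_with_LP:
  assumes "last px \<noteq> LT j" "\<not> lock_after True (lock_trace j px)"
  shows "\<not> lock_must ({#(x, b1), (y, b2)#}, C)"
proof -
  obtain d where d: "px = d @ [LP i]"
    using px_ends_with_LP assms by blast
  have x_free: "\<not> store_after C px j"
    using assms(2) by (cases "lock_trace j px") (auto simp: store_after_def lock_after_eq_last)
  show ?thesis
  proof (cases "lock_after True (lock_trace i py)")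
    case True
    then show ?thesis
      using x_blocks(1,3) x_free by (intro not_must_if_x_first[of px rx "[]"]) auto
  next
    case False
    with d x_free show ?thesis by (rule not_must_if_y_before_last_acquire)
  qed
qed

theorem px_ends_with_release:
  assumes "lock_must ({#(x, b1), (y, b2)#}, C)"
  shows "last px = LT j"
  using assms not_must_if_px_leaves_j_full not_must_if_px_ends_with_LP by blast

lemma px_decomposition:
  assumes "lock_must ({#(x, b1), (y, b2)#}, C)"
  shows "\<exists>R w. px = R @ [LP i] @ w @ [LT j] \<and> set w \<subseteq> {LP j, LT j}"
proof -
  obtain q where q: "px = q @ [LT j]"
    using px_ends_with_release[OF assms] x_reacquires
    by (metis append_butlast_last_id lock_trace_simps(1))
  have "lock_trace i q = lock_trace i px"
    using q distinct by simp
  then have "lock_trace i q \<noteq> []" "lock_after (C i) (lock_trace i q)"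
    using x_reacquires x_blocks(3) by (simp_all add: store_after_def)
  then have "lock_trace i q = butlast (lock_trace i q) @ [True]"
    by (metis append_butlast_last_id lock_after_eq_last)
  then obtain R w where qs: "q = R @ LP i # w" and w: "lock_trace i w = []"
    using lock_trace_last_split by fastforce
  have "set w \<subseteq> set x"
    using x_blocks(1) q qs by auto
  then have "set w \<subseteq> {LP j, LT j}"
    using x_alphabet w set_subset_if_lock_trace_Nil by blast
  with q qs show ?thesis by (intro exI[of _ R] exI[of _ w]) simp
qed

end

theorem lemma5p2:
  fixes IS :: store and ts tr :: "lsym list"
  assumes "correct_translation 2 IS ts tr"
    and "blocking_type IS ts = Some (BT_PP 1)"
    and "blocking_type IS tr = Some (BT_PP 2)"
  shows "(\<exists>R1 w. blocking_prefix IS ts = Some (R1 @ [LP 1] @ w @ [LT 2, LP 1])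
                 \<and> set w \<subseteq> {LP 2, LT 2})
       \<and> (\<exists>R3 w'. blocking_prefix IS tr = Some (R3 @ [LP 2] @ w' @ [LT 1, LP 2])
                 \<and> set w' \<subseteq> {LP 1, LT 1})
       \<and> (\<exists>v z. ts = v @ [LT 2] @ z \<and> set v \<subseteq> {LT 1, LP 1})
       \<and> (\<exists>v z. tr = v @ [LT 1] @ z \<and> set v \<subseteq> {LT 2, LP 2})"
proof -
  have alphabet: "set ts \<subseteq> {LP 1, LT 1, LP 2, LT 2}" "set tr \<subseteq> {LP 1, LT 1, LP 2, LT 2}"
    using assms(1) by (simp_all add: correct_translation_def lock_alphabet_2)
  note must = correct_translation_handshakes_must[OF assms(1)]
  obtain px rx where x: "blocking_prefix IS ts = Some (px @ [LP 1])" "ts = px @ LP 1 # rx"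
    "word_runs IS px" "store_after IS px 1" "lock_trace 1 px \<noteq> []"
    using blocking_type_PP_split[OF assms(2)] by blast
  obtain py ry where y: "blocking_prefix IS tr = Some (py @ [LP 2])" "tr = py @ LP 2 # ry"
    "word_runs IS py" "store_after IS py 2" "lock_trace 2 py \<noteq> []"
    using blocking_type_PP_split[OF assms(3)] by blast
  have x_releases: "\<exists>t. lock_trace 2 ts = False # t"
    using releases_first_if_other_blocks[OF y(2-4) must(1)] .
  have y_releases: "\<exists>t. lock_trace 1 tr = False # t"
    using releases_first_if_other_blocks[OF x(2-4) must(2)] .
  interpret xy: blocked_pair 1 2 IS ts tr px rx py ry
    using alphabet x y x_releases y_releases by unfold_locales auto
  interpret yx: blocked_pair 2 1 IS tr ts py ry px rx
    using alphabet x y x_releases y_releases by unfold_locales auto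
  show ?thesis
    using xy.px_decomposition[OF must(1)] yx.px_decomposition[OF must(2)] x(1) y(1)
      split_at_first_release[OF x_releases alphabet(1)] split_at_first_release[OF y_releases]
      alphabet(2) by (auto simp: insert_commute)
qed

end
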